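(* For every $M\in\Lambda$, the set $\mathcal A(M)$ is either empty or an ideal (i.e. non-empty, directed and downward closed) with respect to $\sqsubseteq$.
   Context: Call-by-value $\lambda$-calculus with permutations: $\lambda$-terms and values are $M,N::=V\mid MN$, $V::=x\mid\lambda x.M$, up to $\alpha$-conversion. Rules: $(\beta_v)$ $(\lambda x.M)V\to M\{x:=V\}$ if $V$ is a value; $(\sigma_1)$ $(\lambda x.M)NP\to(\lambda x.MP)N$ if $x\notin\mathrm{FV}(P)$; $(\sigma_3)$ $V((\lambda x.M)N)\to(\lambda x.VM)N$ if $V$ is a value and $x\notin\mathrm{FV}(V)$. $\to_{\mathsf v}$ is their contextual closure, $\twoheadrightarrow_{\mathsf v}$ its reflexive-transitive closure. $\Lambda_\bot$ is the set of $\lambda$-terms possibly containing a constant $\bot$; $\sqsubseteq$ is the smallest context-closed preorder on $\Lambda_\bot$ with $\bot\sqsubseteq x$ and $\bot\sqsubseteq\lambda x.M$. Approximants $\mathcal A$ ($k\ge0$): $A::=B\mid C$; $B::=x\mid\lambda x.A\mid\bot\mid xBA_1\cdots A_k$; $C::=(\lambda x.A)(yBA_1\cdots A_k)$. $\mathcal A(M)=\{A\in\mathcal A\mid\exists N\in\Lambda,\ M\twoheadrightarrow_{\mathsf v}N,\ A\sqsubseteq N\}$. Directed and downward closed are understood within $\mathcal A$. *)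

theory Defs
  imports Main
begin

datatype trm = Var nat | Lam trm | App trm trm | Bot

fun no_bot :: "trm \<Rightarrow> bool" where
  "no_bot (Var n) = True"
| "no_bot (Lam M) = no_bot M"
| "no_bot (App M N) = (no_bot M \<and> no_bot N)"
| "no_bot Bot = False"

fun is_val :: "trm \<Rightarrow> bool" where
  "is_val (Var n) = True"
| "is_val (Lam M) = True"
| "is_val (App M N) = False"
| "is_val Bot = False"

fun lift :: "nat \<Rightarrow> trm \<Rightarrow> trm" where
  "lift k (Var i) = (if i < k then Var i else Var (Suc i))"
| "lift k (Lam M) = Lam (lift (Suc k) M)"
| "lift k (App M N) = App (lift k M) (lift k N)"
| "lift k Bot = Bot"

fun subst :: "trm \<Rightarrow> nat \<Rightarrow> trm \<Rightarrow> trm" where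
  "subst (Var i) k s = (if i < k then Var i else if i = k then s else Var (i - 1))"
| "subst (Lam M) k s = Lam (subst M (Suc k) (lift 0 s))"
| "subst (App M N) k s = App (subst M k s) (subst N k s)"
| "subst Bot k s = Bot"

text \<open>One-step reduction: contextual closure of beta_v, sigma_1, sigma_3.
  In sigma_1 / sigma_3 the side condition "x not free in P (resp. V)" is
  realised by lifting P (resp. V) under the new binder.\<close>
inductive step_v :: "trm \<Rightarrow> trm \<Rightarrow> bool" where
  beta_v: "is_val V \<Longrightarrow> step_v (App (Lam M) V) (subst M 0 V)"
| sigma1: "step_v (App (App (Lam M) N) P) (App (Lam (App M (lift 0 P))) N)"
| sigma3: "is_val V \<Longrightarrow> step_v (App V (App (Lam M) N)) (App (Lam (App (lift 0 V) M)) N)"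
| ctx_lam: "step_v M M' \<Longrightarrow> step_v (Lam M) (Lam M')"
| ctx_appl: "step_v M M' \<Longrightarrow> step_v (App M N) (App M' N)"
| ctx_appr: "step_v N N' \<Longrightarrow> step_v (App M N) (App M N')"

abbreviation steps_v :: "trm \<Rightarrow> trm \<Rightarrow> bool" where
  "steps_v \<equiv> step_v\<^sup>*\<^sup>*"

inductive approx :: "trm \<Rightarrow> trm \<Rightarrow> bool" where
  refl: "approx M M"
| trans: "approx M N \<Longrightarrow> approx N P \<Longrightarrow> approx M P"
| bot_var: "approx Bot (Var x)"
| bot_lam: "approx Bot (Lam M)"
| ctx_lam: "approx M M' \<Longrightarrow> approx (Lam M) (Lam M')"
| ctx_appl: "approx M M' \<Longrightarrow> approx (App M N) (App M' N)"
| ctx_appr: "approx N N' \<Longrightarrow> approx (App M N) (App M N')"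

inductive isA :: "trm \<Rightarrow> bool" and isB :: "trm \<Rightarrow> bool" and isN :: "trm \<Rightarrow> bool" where
  A_B: "isB t \<Longrightarrow> isA t"
| A_C: "isA A \<Longrightarrow> isN N \<Longrightarrow> isA (App (Lam A) N)"
| B_var: "isB (Var x)"
| B_lam: "isA A \<Longrightarrow> isB (Lam A)"
| B_bot: "isB Bot"
| B_N: "isN N \<Longrightarrow> isB N"
| N_base: "isB B \<Longrightarrow> isN (App (Var x) B)"
| N_app: "isN N \<Longrightarrow> isA A \<Longrightarrow> isN (App N A)"

definition approximants :: "trm \<Rightarrow> trm set" where
  "approximants M = {A. isA A \<and> (\<exists>N. no_bot N \<and> steps_v M N \<and> approx A N)}"

definition directed :: "trm set \<Rightarrow> bool" where
  "directed S \<longleftrightarrow> (\<forall>a\<in>S. \<forall>b\<in>S. \<exists>c\<in>S. approx a c \<and> approx b c)"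

definition downward_closed :: "trm set \<Rightarrow> bool" where
  "downward_closed S \<longleftrightarrow> (\<forall>a\<in>S. \<forall>b. isA b \<and> approx b a \<longrightarrow> b \<in> S)"

definition is_ideal :: "trm set \<Rightarrow> bool" where
  "is_ideal S \<longleftrightarrow> S \<noteq> {} \<and> directed S \<and> downward_closed S"

end

theory Submission
  imports Defs "HOL-Library.Confluence"
begin

text \<open>Reduction \<open>\<rightarrow>\<^sub>v\<close> is confluent: \<open>\<beta>\<^sub>v\<close> by the Tait-Martin-Loef argument
  with parallel reduction, \<open>\<sigma>\<close> by Newman's lemma because every \<open>\<sigma>\<close>-step decreases a
  multiplicative weight, and the two commute, so the Hindley-Rosen lemma applies. An approximant
  never lies below a redex, so an approximant below \<open>N\<close> stays below every reduct of \<open>N\<close>;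
  and two approximants below a common term have a join that is again an approximant. Hence two
  elements of \<open>\<A>(M)\<close>, below reducts \<open>N\<^sub>1\<close> and \<open>N\<^sub>2\<close> of \<open>M\<close>, are both below a common
  reduct \<open>N\<^sub>3\<close>, and so is their join.\<close>

section \<open>De Bruijn substitution\<close>

lemma lift_lift: "i \<le> k \<Longrightarrow> lift (Suc k) (lift i t) = lift i (lift k t)"
  by (induct t arbitrary: i k) auto

lemma lift_subst: "j \<le> i \<Longrightarrow> lift i (subst t j s) = subst (lift (Suc i) t) j (lift i s)"
  by (induct t arbitrary: i j s) (auto simp: lift_lift)

lemma lift_subst_lt: "i \<le> j \<Longrightarrow> lift i (subst t j s) = subst (lift i t) (Suc j) (lift i s)"
  by (induct t arbitrary: i j s) (auto simp: lift_lift)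

lemma subst_lift [simp]: "subst (lift k t) k s = t"
  by (induct t arbitrary: k s) auto

lemma subst_subst:
  "i \<le> j \<Longrightarrow> subst (subst t (Suc j) (lift i v)) i (subst u j v) = subst (subst t i u) j v"
  by (induct t arbitrary: i j u v) (auto simp: lift_lift [symmetric] lift_subst_lt)

lemma is_val_lift [simp]: "is_val (lift k t) = is_val t"
  by (cases t) auto

lemma is_val_subst: "is_val t \<Longrightarrow> is_val s \<Longrightarrow> is_val (subst t k s)"
  by (cases t) auto

lemma no_bot_lift [simp]: "no_bot (lift k t) = no_bot t"
  by (induct t arbitrary: k) auto

lemma no_bot_subst: "no_bot t \<Longrightarrow> no_bot s \<Longrightarrow> no_bot (subst t k s)"
  by (induct t arbitrary: k s) auto

section \<open>Abstract rewriting\<close>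

lemma rtranclp_map: "(\<And>x y. r x y \<Longrightarrow> r (f x) (f y)) \<Longrightarrow> r\<^sup>*\<^sup>* a b \<Longrightarrow> r\<^sup>*\<^sup>* (f a) (f b)"
  by (erule rtranclp_induct) (auto intro: rtranclp.rtrancl_into_rtrancl)

lemma newman:
  assumes wf: "wfp r\<inverse>\<inverse>"
    and local_confluent: "\<And>x y z. r x y \<Longrightarrow> r x z \<Longrightarrow> \<exists>u. r\<^sup>*\<^sup>* y u \<and> r\<^sup>*\<^sup>* z u"
  shows "confluentp r"
proof (rule confluentpI)
  show "\<exists>u. r\<^sup>*\<^sup>* y u \<and> r\<^sup>*\<^sup>* z u" if "r\<^sup>*\<^sup>* x y" "r\<^sup>*\<^sup>* x z" for x y z
    using wf that
  proof (induction x arbitrary: y z rule: wfp_induct_rule)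
    case (less x)
    show ?case
    proof (cases "x = y \<or> x = z")
      case True
      then show ?thesis using less.prems by blast
    next
      case False
      then obtain y1 z1 where y1: "r x y1" "r\<^sup>*\<^sup>* y1 y" and z1: "r x z1" "r\<^sup>*\<^sup>* z1 z"
        using less.prems by (metis converse_rtranclpE)
      obtain u where u: "r\<^sup>*\<^sup>* y1 u" "r\<^sup>*\<^sup>* z1 u"
        using local_confluent y1(1) z1(1) by blast
      obtain v where v: "r\<^sup>*\<^sup>* y v" "r\<^sup>*\<^sup>* u v"
        using less.IH[of y1] y1 u(1) by auto
      obtain w where w: "r\<^sup>*\<^sup>* z w" "r\<^sup>*\<^sup>* v w"
        using less.IH[of z1] z1 rtranclp_trans[OF u(2) v(2)] by auto
      show ?thesis using v(1) w by (blast intro: rtranclp_trans)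
    qed
  qed
qed

lemma commute_rtranclp:
  assumes strip: "\<And>x y z. r x y \<Longrightarrow> s x z \<Longrightarrow> \<exists>u. s\<^sup>=\<^sup>= y u \<and> r\<^sup>*\<^sup>* z u"
    and "r\<^sup>*\<^sup>* x y" "s\<^sup>*\<^sup>* x z"
  shows "\<exists>u. s\<^sup>*\<^sup>* y u \<and> r\<^sup>*\<^sup>* z u"
proof -
  have strip_rtranclp: "\<exists>u. s\<^sup>=\<^sup>= y u \<and> r\<^sup>*\<^sup>* z u" if "r\<^sup>*\<^sup>* x y" "s\<^sup>=\<^sup>= x z" for x y z
    using that
  proof (induction arbitrary: z rule: rtranclp_induct)
    case (step y y')
    then obtain u where u: "s\<^sup>=\<^sup>= y u" "r\<^sup>*\<^sup>* z u" by blast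
    show ?case
    proof (cases "y = u")
      case True
      then show ?thesis using u step(2) by (blast intro: rtranclp.rtrancl_into_rtrancl)
    next
      case False
      with u(1) strip step(2) obtain v where "s\<^sup>=\<^sup>= y' v" "r\<^sup>*\<^sup>* u v" by blast
      then show ?thesis using u(2) by (blast intro: rtranclp_trans)
    qed
  qed blast
  from assms(3,2) show ?thesis
  proof (induction arbitrary: y rule: rtranclp_induct)
    case (step z z')
    then obtain u where u: "s\<^sup>*\<^sup>* y u" "r\<^sup>*\<^sup>* z u" by blast
    from strip_rtranclp[OF u(2)] step(2) obtain v where "s\<^sup>=\<^sup>= u v" "r\<^sup>*\<^sup>* z' v" by blast
    then show ?case using u(1) by (blast intro: rtranclp.rtrancl_into_rtrancl)
  qed blast
qed

lemma confluentp_sup: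
  assumes "confluentp r" "confluentp s"
    and commute: "\<And>x y z. r\<^sup>*\<^sup>* x y \<Longrightarrow> s\<^sup>*\<^sup>* x z \<Longrightarrow> \<exists>u. s\<^sup>*\<^sup>* y u \<and> r\<^sup>*\<^sup>* z u"
  shows "confluentp (sup r s)"
proof -
  have "strong_confluentp (sup r\<^sup>*\<^sup>* s\<^sup>*\<^sup>*)"
  proof
    fix x y z assume "sup r\<^sup>*\<^sup>* s\<^sup>*\<^sup>* x y" "sup r\<^sup>*\<^sup>* s\<^sup>*\<^sup>* x z"
    then have "r\<^sup>*\<^sup>* x y \<or> s\<^sup>*\<^sup>* x y" "r\<^sup>*\<^sup>* x z \<or> s\<^sup>*\<^sup>* x z" by auto
    then have "\<exists>u. (r\<^sup>*\<^sup>* y u \<or> s\<^sup>*\<^sup>* y u) \<and> (r\<^sup>*\<^sup>* z u \<or> s\<^sup>*\<^sup>* z u)"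
      using assms(1,2)[THEN confluentpD] commute[of x y z] commute[of x z y] by blast
    then show "\<exists>u. (sup r\<^sup>*\<^sup>* s\<^sup>*\<^sup>*)\<^sup>*\<^sup>* y u \<and> (sup r\<^sup>*\<^sup>* s\<^sup>*\<^sup>*)\<^sup>=\<^sup>= z u" by auto
  qed
  then have "confluentp (sup r\<^sup>*\<^sup>* s\<^sup>*\<^sup>*)" by (rule strong_confluentp_imp_confluentp)
  then show ?thesis
    unfolding confluentp_conv_strong_confluentp_rtranclp rtranclp_sup_rtranclp .
qed

section \<open>Confluence of \<open>\<beta>\<^sub>v\<close>\<close>

inductive beta :: "trm \<Rightarrow> trm \<Rightarrow> bool" where
  beta_redex: "is_val V \<Longrightarrow> beta (App (Lam M) V) (subst M 0 V)"
| beta_lam: "beta M M' \<Longrightarrow> beta (Lam M) (Lam M')"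
| beta_appl: "beta M M' \<Longrightarrow> beta (App M N) (App M' N)"
| beta_appr: "beta N N' \<Longrightarrow> beta (App M N) (App M N')"

inductive_cases beta_LamE: "beta (Lam M) N"
inductive_cases beta_AppE: "beta (App M N) P"

lemma rtranclp_beta_lam: "beta\<^sup>*\<^sup>* M M' \<Longrightarrow> beta\<^sup>*\<^sup>* (Lam M) (Lam M')"
  by (rule rtranclp_map[of beta Lam, OF beta_lam])

lemma rtranclp_beta_appl: "beta\<^sup>*\<^sup>* M M' \<Longrightarrow> beta\<^sup>*\<^sup>* (App M N) (App M' N)"
  by (rule rtranclp_map[of beta "\<lambda>M. App M N", OF beta_appl])

lemma rtranclp_beta_appr: "beta\<^sup>*\<^sup>* N N' \<Longrightarrow> beta\<^sup>*\<^sup>* (App M N) (App M N')"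
  by (rule rtranclp_map[of beta "App M", OF beta_appr])

lemma beta_lift: "beta M M' \<Longrightarrow> beta (lift k M) (lift k M')"
proof (induct arbitrary: k rule: beta.induct)
  case (beta_redex V M)
  then show ?case using beta.beta_redex[of "lift k V" "lift (Suc k) M"] by (simp add: lift_subst)
qed (auto intro: beta.intros)

lemma beta_is_val: "beta V V' \<Longrightarrow> is_val V \<Longrightarrow> is_val V'"
  by (induct rule: beta.induct) auto

inductive par :: "trm \<Rightarrow> trm \<Rightarrow> bool" where
  par_var: "par (Var x) (Var x)"
| par_bot: "par Bot Bot"
| par_lam: "par M M' \<Longrightarrow> par (Lam M) (Lam M')"
| par_app: "par M M' \<Longrightarrow> par N N' \<Longrightarrow> par (App M N) (App M' N')"
| par_redex: "par M M' \<Longrightarrow> par V V' \<Longrightarrow> is_val V \<Longrightarrow> par (App (Lam M) V) (subst M' 0 V')"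

inductive_cases par_LamE: "par (Lam M) N"
inductive_cases par_AppE: "par (App M N) P"
inductive_cases par_VarE: "par (Var x) N"
inductive_cases par_BotE: "par Bot N"

lemma par_refl: "par t t"
  by (induct t) (auto intro: par.intros)

lemma par_is_val: "par V V' \<Longrightarrow> is_val V \<Longrightarrow> is_val V'"
  by (induct rule: par.induct) auto

lemma par_lift: "par M M' \<Longrightarrow> par (lift k M) (lift k M')"
proof (induct arbitrary: k rule: par.induct)
  case (par_redex M M' V V')
  then show ?case
    using par.par_redex[of "lift (Suc k) M" "lift (Suc k) M'" "lift k V" "lift k V'"]
    by (simp add: lift_subst)
qed (auto intro: par.intros)

lemma par_subst: "par M M' \<Longrightarrow> par N N' \<Longrightarrow> is_val N \<Longrightarrow> par (subst M k N) (subst M' k N')"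
proof (induct arbitrary: k N N' rule: par.induct)
  case (par_var x)
  then show ?case by (auto intro: par.intros)
next
  case (par_lam M M')
  then show ?case by (simp add: par.par_lam par_lift)
next
  case (par_redex M M' V V')
  have "par (App (Lam (subst M (Suc k) (lift 0 N))) (subst V k N))
            (subst (subst M' (Suc k) (lift 0 N')) 0 (subst V' k N'))"
    using par_redex by (intro par.par_redex) (simp_all add: par_lift is_val_subst)
  then show ?case by (simp add: subst_subst[of 0 k, simplified])
qed (auto intro: par.intros)

lemma par_diamond: "par M M1 \<Longrightarrow> par M M2 \<Longrightarrow> \<exists>M3. par M1 M3 \<and> par M2 M3"
proof (induct arbitrary: M2 rule: par.induct)
  case (par_var x)
  then show ?case by (auto elim: par_VarE intro: par.intros)
next
  case par_bot
  then show ?case by (auto elim: par_BotE intro: par.intros)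
next
  case (par_lam M M')
  then show ?case by (auto elim!: par_LamE intro: par.intros)
next
  case (par_app M M' N N')
  from par_app.prems show ?case
  proof (cases rule: par_AppE[consumes 1])
    case (1 M'' N'')
    then show ?thesis using par_app by (blast intro: par.intros)
  next
    case (2 L L' V')
    from par_app 2 obtain L1 where L1: "M' = Lam L1" "par L L1" by (auto elim: par_LamE)
    from par_app.hyps(2) 2 L1 obtain X where "par (Lam L1) X" "par (Lam L') X"
      using par.par_lam by blast
    then obtain X' where X: "par L1 X'" "par L' X'" by (auto elim!: par_LamE)
    from par_app.hyps(4) 2 obtain Y where Y: "par N' Y" "par V' Y" by blast
    have "is_val N'" using 2 par_app par_is_val by blast
    then have "par (App M' N') (subst X' 0 Y)" using L1 X Y by (auto intro: par.intros)
    moreover have "par (subst L' 0 V') (subst X' 0 Y)"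
      using X Y 2 par_is_val by (blast intro: par_subst)
    ultimately show ?thesis using 2 by blast
  qed
next
  case (par_redex M M' V V')
  from par_redex.prems show ?case
  proof (cases rule: par_AppE[consumes 1])
    case (1 M'' N'')
    then obtain L where L: "M'' = Lam L" "par M L" by (auto elim: par_LamE)
    from par_redex L obtain X where X: "par M' X" "par L X" by blast
    from par_redex 1 obtain Y where Y: "par V' Y" "par N'' Y" by blast
    have "is_val N''" using 1 par_redex par_is_val by blast
    then have "par M2 (subst X 0 Y)" using 1 L X Y by (auto intro: par.intros)
    moreover have "par (subst M' 0 V') (subst X 0 Y)"
      using X Y par_redex par_is_val by (blast intro: par_subst)
    ultimately show ?thesis by blast
  next
    case (2 L L' V'')
    from par_redex 2 obtain X where X: "par M' X" "par L' X" by blast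
    from par_redex 2 obtain Y where Y: "par V' Y" "par V'' Y" by blast
    show ?thesis using X Y 2 par_redex par_is_val by (blast intro: par_subst)
  qed
qed

lemma beta_imp_par: "beta M N \<Longrightarrow> par M N"
  by (induct rule: beta.induct) (auto intro: par.intros par_refl)

lemma par_imp_rtranclp_beta: "par M N \<Longrightarrow> beta\<^sup>*\<^sup>* M N"
proof (induct rule: par.induct)
  case (par_lam M M')
  then show ?case by (simp add: rtranclp_beta_lam)
next
  case (par_app M M' N N')
  then show ?case by (blast intro: rtranclp_beta_appl rtranclp_beta_appr rtranclp_trans)
next
  case (par_redex M M' V V')
  have "beta\<^sup>*\<^sup>* (App (Lam M) V) (App (Lam M') V')"
    using par_redex by (blast intro: rtranclp_beta_lam rtranclp_beta_appl rtranclp_beta_appr rtranclp_trans)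
  also have "beta \<dots> (subst M' 0 V')"
    using par_redex par_is_val by (blast intro: beta_redex)
  finally show ?case .
qed auto

lemma rtranclp_beta_eq_par: "beta\<^sup>*\<^sup>* = par\<^sup>*\<^sup>*"
proof (rule antisym)
  show "beta\<^sup>*\<^sup>* \<le> par\<^sup>*\<^sup>*" by (rule rtranclp_mono) (auto intro: beta_imp_par)
  have "par\<^sup>*\<^sup>* \<le> beta\<^sup>*\<^sup>*\<^sup>*\<^sup>*" by (rule rtranclp_mono) (auto intro: par_imp_rtranclp_beta)
  then show "par\<^sup>*\<^sup>* \<le> beta\<^sup>*\<^sup>*" by simp
qed

lemma confluentp_beta: "confluentp beta"
proof -
  have "strong_confluentp par"
    by rule (use par_diamond in blast)
  then have "confluentp par" by (rule strong_confluentp_imp_confluentp)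
  then show ?thesis
    unfolding confluentp_conv_strong_confluentp_rtranclp rtranclp_beta_eq_par .
qed

section \<open>Confluence of \<open>\<sigma>\<close>\<close>

inductive sigma :: "trm \<Rightarrow> trm \<Rightarrow> bool" where
  sigma_1: "sigma (App (App (Lam M) N) P) (App (Lam (App M (lift 0 P))) N)"
| sigma_3: "is_val V \<Longrightarrow> sigma (App V (App (Lam M) N)) (App (Lam (App (lift 0 V) M)) N)"
| sigma_lam: "sigma M M' \<Longrightarrow> sigma (Lam M) (Lam M')"
| sigma_appl: "sigma M M' \<Longrightarrow> sigma (App M N) (App M' N)"
| sigma_appr: "sigma N N' \<Longrightarrow> sigma (App M N) (App M N')"

inductive_cases sigma_LamE: "sigma (Lam M) N"
inductive_cases sigma_AppE: "sigma (App M N) P"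

lemma rtranclp_sigma_lam: "sigma\<^sup>*\<^sup>* M M' \<Longrightarrow> sigma\<^sup>*\<^sup>* (Lam M) (Lam M')"
  by (rule rtranclp_map[of sigma Lam, OF sigma_lam])

lemma rtranclp_sigma_appl: "sigma\<^sup>*\<^sup>* M M' \<Longrightarrow> sigma\<^sup>*\<^sup>* (App M N) (App M' N)"
  by (rule rtranclp_map[of sigma "\<lambda>M. App M N", OF sigma_appl])

lemma rtranclp_sigma_appr: "sigma\<^sup>*\<^sup>* N N' \<Longrightarrow> sigma\<^sup>*\<^sup>* (App M N) (App M N')"
  by (rule rtranclp_map[of sigma "App M", OF sigma_appr])

lemma sigma_is_val: "sigma V V' \<Longrightarrow> is_val V \<Longrightarrow> is_val V'"
  by (induct rule: sigma.induct) auto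

lemma sigma_lift: "sigma M M' \<Longrightarrow> sigma (lift k M) (lift k M')"
proof (induct arbitrary: k rule: sigma.induct)
  case (sigma_1 M N P)
  then show ?case
    using sigma.sigma_1[of "lift (Suc k) M" "lift k N" "lift k P"] by (simp add: lift_lift)
next
  case (sigma_3 V M N)
  then show ?case
    using sigma.sigma_3[of "lift k V" "lift (Suc k) M" "lift k N"] by (simp add: lift_lift)
qed (auto intro: sigma.intros)

lemma sigma_subst: "sigma M M' \<Longrightarrow> is_val s \<Longrightarrow> sigma (subst M k s) (subst M' k s)"
proof (induct arbitrary: k s rule: sigma.induct)
  case (sigma_1 M N P)
  then show ?case
    using sigma.sigma_1[of "subst M (Suc k) (lift 0 s)" "subst N k s" "subst P k s"]
    by (simp add: lift_subst_lt)
next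
  case (sigma_3 V M N)
  then show ?case
    using sigma.sigma_3[of "subst V k s" "subst M (Suc k) (lift 0 s)" "subst N k s"]
    by (simp add: lift_subst_lt is_val_subst)
qed (auto intro: sigma.intros)

lemma rtranclp_sigma_subst_arg: "sigma N N' \<Longrightarrow> sigma\<^sup>*\<^sup>* (subst L k N) (subst L k N')"
proof (induct L arbitrary: k N N')
  case (Lam L)
  then show ?case by (simp add: rtranclp_sigma_lam sigma_lift)
next
  case (App L1 L2)
  then have "sigma\<^sup>*\<^sup>* (subst L1 k N) (subst L1 k N')" "sigma\<^sup>*\<^sup>* (subst L2 k N) (subst L2 k N')"
    by blast+
  then show ?case by (auto intro: rtranclp_sigma_appl rtranclp_sigma_appr rtranclp_trans)
qed auto

fun sigma_weight :: "trm \<Rightarrow> nat" where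
  "sigma_weight (Var x) = 2"
| "sigma_weight Bot = 2"
| "sigma_weight (Lam M) = sigma_weight M + 1"
| "sigma_weight (App M N) = 2 * sigma_weight M * sigma_weight N"

lemma sigma_weight_ge_2: "2 \<le> sigma_weight t"
  by (induct t) (auto simp: order_trans[OF _ mult_le_mono])

lemma sigma_weight_lift [simp]: "sigma_weight (lift k t) = sigma_weight t"
  by (induct t arbitrary: k) auto

lemma sigma_weight_less: "sigma M M' \<Longrightarrow> sigma_weight M' < sigma_weight M"
proof (induct rule: sigma.induct)
  case (sigma_1 M N P)
  have "2 * sigma_weight N < 4 * sigma_weight N * sigma_weight P"
    using sigma_weight_ge_2[of N] sigma_weight_ge_2[of P] by (simp add: mult_le_mono)
  then show ?case by (simp add: algebra_simps)
next
  case (sigma_3 V M N)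
  have "2 * sigma_weight N < 4 * sigma_weight V * sigma_weight N"
    using sigma_weight_ge_2[of N] sigma_weight_ge_2[of V] by (simp add: mult_le_mono)
  then show ?case by (simp add: algebra_simps)
next
  case (sigma_appl M M' N)
  then show ?case using sigma_weight_ge_2[of N] by simp
next
  case (sigma_appr N N' M)
  then show ?case using sigma_weight_ge_2[of M] by simp
qed simp

lemma sigma_1_joinable:
  assumes "sigma (App (App (Lam M) N) P) c"
  shows "\<exists>d. sigma\<^sup>*\<^sup>* (App (Lam (App M (lift 0 P))) N) d \<and> sigma\<^sup>*\<^sup>* c d"
  using assms
proof (cases rule: sigma_AppE[consumes 1])
  case (3 X)
  from 3(2) show ?thesis
  proof (cases rule: sigma_AppE[consumes 1])
    case (2 M2 N2)
    \<comment> \<open>Both sides reach \<open>(\<lambda>y. (\<lambda>x. M P) M\<^sub>2) N\<^sub>2\<close>.\<close>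
    let ?d = "App (Lam (App (Lam (App (lift (Suc 0) M) (lift 0 (lift 0 P)))) M2)) N2"
    have "sigma (App (Lam (App M (lift 0 P))) (App (Lam M2) N2)) ?d"
      using sigma.sigma_3[of "Lam (App M (lift 0 P))" M2 N2] by (simp add: lift_lift)
    moreover have "sigma c (App (Lam (App (App (Lam (lift (Suc 0) M)) M2) (lift 0 P))) N2)"
      using 3 2 sigma.sigma_1[of "App (Lam (lift (Suc 0) M)) M2" N2 P] by simp
    moreover have "sigma (App (Lam (App (App (Lam (lift (Suc 0) M)) M2) (lift 0 P))) N2) ?d"
      by (intro sigma.intros)
    ultimately show ?thesis using 2 by (blast intro: rtranclp.rtrancl_into_rtrancl)
  next
    case (3 Y)
    then obtain M' where "Y = Lam M'" "sigma M M'" by (auto elim: sigma_LamE)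
    then show ?thesis using 3 \<open>c = App X P\<close>
      by (blast intro: sigma.sigma_1 sigma.sigma_appl sigma.sigma_lam)
  next
    case (4 N')
    then show ?thesis using 3 by (blast intro: sigma.sigma_1 sigma.sigma_appr)
  qed auto
next
  case (4 P')
  then show ?thesis
    by (blast intro: sigma.sigma_1 sigma.sigma_appl sigma.sigma_lam sigma.sigma_appr sigma_lift)
qed auto

lemma sigma_3_joinable:
  assumes "sigma (App V (App (Lam M) N)) c" "is_val V"
  shows "\<exists>d. sigma\<^sup>*\<^sup>* (App (Lam (App (lift 0 V) M)) N) d \<and> sigma\<^sup>*\<^sup>* c d"
  using assms
proof (cases rule: sigma_AppE[consumes 1])
  case (3 V')
  then have "is_val V'" using assms(2) sigma_is_val by blast
  then show ?thesis using 3
    by (blast intro: sigma.sigma_3 sigma.sigma_appl sigma.sigma_lam sigma_lift)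
next
  case (4 X)
  from 4(2) show ?thesis
  proof (cases rule: sigma_AppE[consumes 1])
    case (2 M2 N2)
    \<comment> \<open>Both sides reach \<open>(\<lambda>y. (\<lambda>x. V M) M\<^sub>2) N\<^sub>2\<close>.\<close>
    let ?d = "App (Lam (App (Lam (App (lift 0 (lift 0 V)) (lift (Suc 0) M))) M2)) N2"
    have "sigma (App (Lam (App (lift 0 V) M)) (App (Lam M2) N2)) ?d"
      using sigma.sigma_3[of "Lam (App (lift 0 V) M)" M2 N2] by (simp add: lift_lift)
    moreover have "sigma c (App (Lam (App (lift 0 V) (App (Lam (lift (Suc 0) M)) M2))) N2)"
      using 4 2 assms(2) sigma.sigma_3[of V "App (Lam (lift (Suc 0) M)) M2" N2] by simp
    moreover have "sigma (App (Lam (App (lift 0 V) (App (Lam (lift (Suc 0) M)) M2))) N2) ?d"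
      using assms(2) by (intro sigma.intros) simp
    ultimately show ?thesis using 2 by (blast intro: rtranclp.rtrancl_into_rtrancl)
  next
    case (3 Y)
    then obtain M' where "Y = Lam M'" "sigma M M'" by (auto elim: sigma_LamE)
    then show ?thesis using 4 3 assms(2)
      by (blast intro: sigma.sigma_3 sigma.sigma_appl sigma.sigma_lam sigma.sigma_appr)
  next
    case (4 N')
    then show ?thesis using \<open>c = App V X\<close> assms(2) by (blast intro: sigma.sigma_3 sigma.sigma_appr)
  qed auto
qed (use assms in auto)

lemma sigma_local_confluent: "sigma a b \<Longrightarrow> sigma a c \<Longrightarrow> \<exists>d. sigma\<^sup>*\<^sup>* b d \<and> sigma\<^sup>*\<^sup>* c d"
proof (induct arbitrary: c rule: sigma.induct)
  case (sigma_1 M N P)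
  then show ?case by (rule sigma_1_joinable)
next
  case (sigma_3 V M N)
  then show ?case using sigma_3_joinable by blast
next
  case (sigma_lam M M')
  then show ?case by (auto elim!: sigma_LamE intro: rtranclp_sigma_lam)
next
  case (sigma_appl M M' N)
  have step: "sigma (App M N) (App M' N)" using sigma_appl(1) by (rule sigma.sigma_appl)
  from sigma_appl.prems show ?case
  proof (cases rule: sigma_AppE[consumes 1])
    case (1 L K)
    then show ?thesis using sigma_1_joinable[of L K N "App M' N"] step by blast
  next
    case (2 L K)
    then show ?thesis using sigma_3_joinable[of M L K "App M' N"] step by blast
  next
    case 3
    then show ?thesis using sigma_appl by (blast intro: rtranclp_sigma_appl)
  next
    case 4
    then show ?thesis using sigma_appl by (blast intro: sigma.intros)
  qed
next
  case (sigma_appr N N' M)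
  have step: "sigma (App M N) (App M N')" using sigma_appr(1) by (rule sigma.sigma_appr)
  from sigma_appr.prems show ?case
  proof (cases rule: sigma_AppE[consumes 1])
    case (1 L K)
    then show ?thesis using sigma_1_joinable[of L K N "App M N'"] step by blast
  next
    case (2 L K)
    then show ?thesis using sigma_3_joinable[of M L K "App M N'"] step by blast
  next
    case 3
    then show ?thesis using sigma_appr by (blast intro: sigma.intros)
  next
    case 4
    then show ?thesis using sigma_appr by (blast intro: rtranclp_sigma_appr)
  qed
qed

lemma confluentp_sigma: "confluentp sigma"
proof (rule newman)
  show "wfp sigma\<inverse>\<inverse>"
    by (rule wfp_if_convertible_to_nat[where f = sigma_weight]) (simp add: sigma_weight_less)
qed (rule sigma_local_confluent)

section \<open>Confluence of \<open>\<rightarrow>\<^sub>v\<close>\<close>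

lemma sigma_1_beta_commute:
  assumes "beta (App (App (Lam M) N) P) c"
  shows "\<exists>d. beta\<^sup>=\<^sup>= (App (Lam (App M (lift 0 P))) N) d \<and> sigma\<^sup>*\<^sup>* c d"
  using assms
proof (cases rule: beta_AppE[consumes 1])
  case (2 X)
  from 2(2) show ?thesis
  proof (cases rule: beta_AppE[consumes 1])
    case 1
    then have "beta (App (Lam (App M (lift 0 P))) N) (subst (App M (lift 0 P)) 0 N)"
      by (intro beta_redex) simp
    then show ?thesis using 1 2 by auto
  next
    case (2 Y)
    then obtain M' where "Y = Lam M'" "beta M M'" by (auto elim: beta_LamE)
    then show ?thesis using 2 \<open>c = App X P\<close>
      by (blast intro: sigma.sigma_1 beta_appl beta_lam)
  next
    case (3 N')
    then show ?thesis using 2 by (blast intro: sigma.sigma_1 beta_appr)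
  qed
next
  case (3 P')
  then show ?thesis by (blast intro: sigma.sigma_1 beta_appl beta_lam beta_appr beta_lift)
qed auto

lemma sigma_3_beta_commute:
  assumes "beta (App V (App (Lam M) N)) c" "is_val V"
  shows "\<exists>d. beta\<^sup>=\<^sup>= (App (Lam (App (lift 0 V) M)) N) d \<and> sigma\<^sup>*\<^sup>* c d"
  using assms(1)
proof (cases rule: beta_AppE[consumes 1])
  case 1
  then show ?thesis by simp
next
  case (2 V')
  then have "is_val V'" using assms(2) beta_is_val by blast
  then show ?thesis using 2 by (blast intro: sigma.sigma_3 beta_appl beta_lam beta_lift)
next
  case (3 X)
  from 3(2) show ?thesis
  proof (cases rule: beta_AppE[consumes 1])
    case 1
    then have "beta (App (Lam (App (lift 0 V) M)) N) (subst (App (lift 0 V) M) 0 N)"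
      by (intro beta_redex) simp
    then show ?thesis using 1 3 by auto
  next
    case (2 Y)
    then obtain M' where "Y = Lam M'" "beta M M'" by (auto elim: beta_LamE)
    then show ?thesis using 2 3 assms(2)
      by (blast intro: sigma.sigma_3 beta_appl beta_lam beta_appr)
  next
    case (3 N')
    then show ?thesis using \<open>c = App V X\<close> assms(2) by (blast intro: sigma.sigma_3 beta_appr)
  qed
qed

lemma sigma_beta_commute: "sigma a b \<Longrightarrow> beta a c \<Longrightarrow> \<exists>d. beta\<^sup>=\<^sup>= b d \<and> sigma\<^sup>*\<^sup>* c d"
proof (induct arbitrary: c rule: sigma.induct)
  case (sigma_1 M N P)
  then show ?case by (rule sigma_1_beta_commute)
next
  case (sigma_3 V M N)
  then show ?case using sigma_3_beta_commute by blast
next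
  case (sigma_lam M M')
  from sigma_lam(3) obtain M2 where "c = Lam M2" "beta M M2" by (auto elim: beta_LamE)
  with sigma_lam(2) obtain d where d: "beta\<^sup>=\<^sup>= M' d" "sigma\<^sup>*\<^sup>* M2 d" by blast
  have "beta\<^sup>=\<^sup>= (Lam M') (Lam d)" using d(1) by (auto intro: beta_lam)
  then show ?case using \<open>c = Lam M2\<close> d(2) by (blast intro: rtranclp_sigma_lam)
next
  case (sigma_appl M M' N)
  from sigma_appl.prems show ?case
  proof (cases rule: beta_AppE[consumes 1])
    case (1 L)
    with sigma_appl(1) obtain L' where "M' = Lam L'" "sigma L L'" by (auto elim: sigma_LamE)
    then show ?thesis using 1 by (blast intro: beta_redex sigma_subst)
  next
    case (2 M2)
    with sigma_appl(2) obtain d where d: "beta\<^sup>=\<^sup>= M' d" "sigma\<^sup>*\<^sup>* M2 d" by blast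
    have "beta\<^sup>=\<^sup>= (App M' N) (App d N)" using d(1) by (auto intro: beta_appl)
    then show ?thesis using 2 d(2) by (blast intro: rtranclp_sigma_appl)
  next
    case 3
    then show ?thesis using sigma_appl(1) by (blast intro: beta_appr sigma.sigma_appl)
  qed
next
  case (sigma_appr N N' M)
  from sigma_appr.prems show ?case
  proof (cases rule: beta_AppE[consumes 1])
    case (1 L)
    then have "is_val N'" using sigma_appr(1) sigma_is_val by blast
    then show ?thesis using 1 sigma_appr(1) by (blast intro: beta_redex rtranclp_sigma_subst_arg)
  next
    case 2
    then show ?thesis using sigma_appr(1) by (blast intro: beta_appl sigma.sigma_appr)
  next
    case (3 N2)
    with sigma_appr(2) obtain d where d: "beta\<^sup>=\<^sup>= N' d" "sigma\<^sup>*\<^sup>* N2 d" by blast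
    have "beta\<^sup>=\<^sup>= (App M N') (App M d)" using d(1) by (auto intro: beta_appr)
    then show ?thesis using 3 d(2) by (blast intro: rtranclp_sigma_appr)
  qed
qed

lemma step_v_eq_sup: "step_v = sup beta sigma"
proof (intro ext iffI)
  fix M N
  assume "step_v M N"
  then show "sup beta sigma M N"
    by induct (auto intro: beta.intros sigma.intros)
next
  fix M N
  assume "sup beta sigma M N"
  then consider "beta M N" | "sigma M N" by auto
  then show "step_v M N"
  proof cases
    case 1
    then show ?thesis by induct (auto intro: step_v.intros)
  next
    case 2
    then show ?thesis by induct (auto intro: step_v.intros)
  qed
qed

lemma confluentp_step_v: "confluentp step_v"
  unfolding step_v_eq_sup
proof (rule confluentp_sup[OF confluentp_beta confluentp_sigma])
  show "\<exists>u. sigma\<^sup>*\<^sup>* y u \<and> beta\<^sup>*\<^sup>* z u" if "beta\<^sup>*\<^sup>* x y" "sigma\<^sup>*\<^sup>* x z" for x y z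
  proof -
    have "\<exists>u. beta\<^sup>*\<^sup>* z u \<and> sigma\<^sup>*\<^sup>* y u"
      using sigma_beta_commute that(2,1) by (rule commute_rtranclp)
    then show ?thesis by blast
  qed
qed

lemma no_bot_step_v: "step_v M N \<Longrightarrow> no_bot M \<Longrightarrow> no_bot N"
  by (induct rule: step_v.induct) (auto intro: no_bot_subst)

lemma no_bot_steps_v: "steps_v M N \<Longrightarrow> no_bot M \<Longrightarrow> no_bot N"
  by (induct rule: rtranclp_induct) (auto intro: no_bot_step_v)

section \<open>Approximants\<close>

fun below :: "trm \<Rightarrow> trm \<Rightarrow> bool" where
  "below Bot t = (t = Bot \<or> is_val t)"
| "below (Var x) t = (t = Var x)"
| "below (Lam a) (Lam b) = below a b"
| "below (App a1 a2) (App b1 b2) = (below a1 b1 \<and> below a2 b2)"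
| "below _ _ = False"

lemma below_refl: "below t t"
  by (induct t) auto

lemma below_trans: "below a b \<Longrightarrow> below b c \<Longrightarrow> below a c"
proof (induct a arbitrary: b c)
  case Bot
  then show ?case by (cases b; cases c) auto
next
  case (Lam a)
  then show ?case by (cases b; cases c) auto
next
  case (App a1 a2)
  then show ?case by (cases b; cases c) auto
qed auto

lemma below_Bot_iff [simp]: "below a Bot \<longleftrightarrow> a = Bot"
  by (cases a) auto

lemma below_Var_iff [simp]: "below a (Var x) \<longleftrightarrow> a = Bot \<or> a = Var x"
  by (cases a) auto

lemma below_Lam_iff [simp]: "below a (Lam t) \<longleftrightarrow> a = Bot \<or> (\<exists>a'. a = Lam a' \<and> below a' t)"
  by (cases a) auto

lemma below_App_iff [simp]:
  "below a (App t1 t2) \<longleftrightarrow> (\<exists>a1 a2. a = App a1 a2 \<and> below a1 t1 \<and> below a2 t2)"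
  by (cases a) auto

lemma approx_iff_below: "approx a b \<longleftrightarrow> below a b"
proof
  show "approx a b \<Longrightarrow> below a b"
    by (induct rule: approx.induct) (auto intro: below_refl below_trans)
  show "below a b \<Longrightarrow> approx a b"
  proof (induct a arbitrary: b)
    case (App a1 a2)
    then obtain b1 b2 where "b = App b1 b2" "approx a1 b1" "approx a2 b2"
      by (cases b) auto
    then show ?case by (blast intro: approx.trans approx.ctx_appl approx.ctx_appr)
  next
    case (Lam a)
    then show ?case by (cases b) (auto intro: approx.intros)
  next
    case Bot
    then show ?case by (cases b) (auto intro: approx.intros)
  qed (auto intro: approx.intros)
qed

inductive_cases isN_AppE: "isN (App a b)"
inductive_cases isA_AppE: "isA (App a b)"
inductive_cases isB_AppE: "isB (App a b)"
inductive_cases isN_VarE: "isN (Var a)"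
inductive_cases isN_LamE: "isN (Lam a)"
inductive_cases isN_BotE: "isN Bot"
inductive_cases isA_LamE: "isA (Lam a)"
inductive_cases isB_LamE: "isB (Lam a)"

lemmas approximant_elims =
  isN_AppE isA_AppE isB_AppE isN_VarE isN_LamE isN_BotE isA_LamE isB_LamE

lemma isN_simps [simp]:
  "\<not> isN (Var x)" "\<not> isN (Lam a)" "\<not> isN Bot"
  "isN (App a1 a2) \<longleftrightarrow> (\<exists>x. a1 = Var x) \<and> isB a2 \<or> isN a1 \<and> isA a2"
  by (auto elim: approximant_elims intro: isA_isB_isN.intros)

lemma isB_simps [simp]:
  "isB (Var x)" "isB (Lam a) \<longleftrightarrow> isA a" "isB Bot"
  "isB (App a1 a2) \<longleftrightarrow> isN (App a1 a2)"
  by (auto elim: approximant_elims intro: isA_isB_isN.intros simp del: isN_simps)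

lemma isA_simps [simp]:
  "isA (Var x)" "isA (Lam a) \<longleftrightarrow> isA a" "isA Bot"
  "isA (App a1 a2) \<longleftrightarrow> (\<exists>a'. a1 = Lam a' \<and> isA a') \<and> isN a2 \<or> isN (App a1 a2)"
  by (auto elim: approximant_elims intro: isA_isB_isN.intros simp del: isN_simps isB_simps)

lemma isN_imp_isA: "isN t \<Longrightarrow> isA t"
  by (intro A_B B_N)

lemma isN_below_not_val: "isN t \<Longrightarrow> below t s \<Longrightarrow> \<not> is_val s"
  by (cases t; cases s) auto

lemma isN_not_below_redex: "isN t \<Longrightarrow> \<not> below t (App (Lam M) X)"
  by (cases t) (auto elim: below.elims)

lemma isB_not_below_redex: "isB t \<Longrightarrow> \<not> below t (App (Lam M) X)"
  by (cases t) (auto dest: isN_not_below_redex simp del: isN_simps)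

lemma approximant_below_step_v: "step_v N N' \<Longrightarrow> isA A \<Longrightarrow> below A N \<Longrightarrow> below A N'"
proof (induct arbitrary: A rule: step_v.induct)
  \<comment> \<open>In the three redex cases the hypotheses are contradictory.\<close>
  case (beta_v V M)
  then obtain a1 a2 where "A = App a1 a2" "below a1 (Lam M)" "below a2 V" by auto
  then show ?case using beta_v isN_below_not_val[of a2 V] by auto
next
  case (sigma1 M N P)
  then obtain a1 a2 where "A = App a1 a2" "below a1 (App (Lam M) N)" by auto
  then show ?case using sigma1 isN_not_below_redex[of a1 M N] by auto
next
  case (sigma3 V M N)
  then obtain a1 a2 where "A = App a1 a2" "below a1 V" "below a2 (App (Lam M) N)" by auto
  then show ?case
    using sigma3 isN_below_not_val[of a1 V] isN_not_below_redex[of a2 M N]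
      isB_not_below_redex[of a2 M N] by auto
next
  case (ctx_lam M M')
  then show ?case by (cases A) auto
next
  case (ctx_appl M M' N)
  then obtain a1 a2 where A: "A = App a1 a2" "below a1 M" "below a2 N" by auto
  have "isA a1 \<or> (\<exists>x. a1 = Var x)" using ctx_appl A by (auto intro: isN_imp_isA)
  then have "below a1 M'" using ctx_appl A by (auto elim: step_v.cases)
  then show ?case using A by simp
next
  case (ctx_appr N N' M)
  then obtain a1 a2 where A: "A = App a1 a2" "below a1 M" "below a2 N" by auto
  have "isA a2" using ctx_appr A by (auto intro: isN_imp_isA A_B)
  then show ?case using ctx_appr A by simp
qed

lemma approximant_below_steps_v: "steps_v N N' \<Longrightarrow> isA A \<Longrightarrow> below A N \<Longrightarrow> below A N'"
  by (induct rule: rtranclp_induct) (auto intro: approximant_below_step_v)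

text \<open>Only meaningful for two terms below a common term; the last equation is junk.\<close>

fun join :: "trm \<Rightarrow> trm \<Rightarrow> trm" where
  "join Bot b = b"
| "join a Bot = a"
| "join (Lam a) (Lam b) = Lam (join a b)"
| "join (App a1 a2) (App b1 b2) = App (join a1 b1) (join a2 b2)"
| "join a b = a"

lemma below_join:
  assumes "below a t" "below b t"
  shows "below a (join a b)" "below b (join a b)" "below (join a b) t"
  using assms by (induct t arbitrary: a b) (auto simp: below_refl)

lemma approximant_join:
  assumes "below a t" "below b t"
  shows "(isN a \<longrightarrow> isN b \<longrightarrow> isN (join a b)) \<and> (isB a \<longrightarrow> isB b \<longrightarrow> isB (join a b))
    \<and> (isA a \<longrightarrow> isA b \<longrightarrow> isA (join a b))"
  using assms
proof (induct t arbitrary: a b)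
  case (App t1 t2)
  then obtain a1 a2 b1 b2 where ab: "a = App a1 a2" "b = App b1 b2"
    and below: "below a1 t1" "below a2 t2" "below b1 t1" "below b2 t2" by auto
  note IH1 = App.hyps(1)[OF below(1,3)] and IH2 = App.hyps(2)[OF below(2,4)]
  have N: "isN (join a b)" if Na: "isN a" and Nb: "isN b"
  proof (cases "\<exists>x. a1 = Var x")
    case True
    then obtain x where "a1 = Var x" by blast
    then have "b1 = Var x" using below Nb ab by auto
    then show ?thesis using \<open>a1 = Var x\<close> Na Nb ab IH2 by auto
  next
    case False
    then have "isN a1" "isA a2" using Na ab by auto
    then obtain c d where "t1 = App c d" using below(1) by (cases a1; cases t1) auto
    then have "isN b1" "isA b2" using Nb ab below(3) by auto
    then show ?thesis using \<open>isN a1\<close> \<open>isA a2\<close> ab IH1 IH2 by auto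
  qed
  have A: "isA (join a b)" if Aa: "isA a" and Ab: "isA b"
  proof (cases "\<exists>a'. a1 = Lam a'")
    case True
    then obtain a' where "a1 = Lam a'" by blast
    then obtain b' where "b1 = Lam b'" using below(1,3) Ab ab by (cases t1; cases b1) auto
    then show ?thesis using \<open>a1 = Lam a'\<close> Aa Ab ab IH1 IH2 by auto
  next
    case False
    then have "isN a" using Aa ab by auto
    then have "\<nexists>b'. b1 = Lam b'" using below(1,3) ab by (cases a1; cases t1) auto
    then have "isN b" using Ab ab by auto
    then show ?thesis using N \<open>isN a\<close> by (simp add: isN_imp_isA)
  qed
  show ?case using N A ab by simp
qed auto

lemma isA_join: "below a t \<Longrightarrow> below b t \<Longrightarrow> isA a \<Longrightarrow> isA b \<Longrightarrow> isA (join a b)"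
  using approximant_join by blast

lemma approximants_iff:
  "A \<in> approximants M \<longleftrightarrow> isA A \<and> (\<exists>N. no_bot N \<and> steps_v M N \<and> below A N)"
  unfolding approximants_def approx_iff_below by simp

lemma directed_approximants:
  assumes "no_bot M"
  shows "directed (approximants M)"
  unfolding directed_def approx_iff_below
proof (intro ballI)
  fix a b
  assume "a \<in> approximants M" "b \<in> approximants M"
  then obtain N1 N2 where a: "isA a" "no_bot N1" "steps_v M N1" "below a N1"
    and b: "isA b" "no_bot N2" "steps_v M N2" "below b N2"
    unfolding approximants_iff by blast
  obtain N3 where N3: "steps_v N1 N3" "steps_v N2 N3"
    using confluentpD[OF confluentp_step_v a(3) b(3)] by blast
  have "no_bot N3" using no_bot_steps_v[OF N3(1) a(2)] .
  moreover have "steps_v M N3" using a(3) N3(1) by (rule rtranclp_trans)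
  moreover have "below a N3" "below b N3"
    using approximant_below_steps_v N3 a(1,4) b(1,4) by blast+
  ultimately have "join a b \<in> approximants M"
    unfolding approximants_iff using a(1) b(1) below_join(3) isA_join by blast
  moreover have "below a (join a b)" "below b (join a b)"
    using below_join(1,2) \<open>below a N3\<close> \<open>below b N3\<close> by blast+
  ultimately show "\<exists>c\<in>approximants M. below a c \<and> below b c" by blast
qed

lemma downward_closed_approximants: "downward_closed (approximants M)"
  unfolding downward_closed_def approximants_def by (blast intro: approx.trans)

theorem proposition2p7:
  assumes "no_bot M"
  shows "approximants M = {} \<or> is_ideal (approximants M)"
  unfolding is_ideal_def using directed_approximants[OF assms] downward_closed_approximants
  by blast

end
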